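(* ODH satisfies the lower quota. Let $\sigma=\langle\mathcal V,\mathcal C,S,B\rangle$ be an approval-based multi-winner election, let $\mathcal A\subseteq\mathcal C$, and let $\{y_1,\dots,y_n\}\subseteq2^{\mathcal C}$ be such that: - $\mathcal A\subseteq y_j$ for all $j=1,\dots,n$; - with $q=\frac{\sum_{j=1}^nB(y_j)}{|\mathcal V|}S$, one has $|\mathcal A|\ge\lfloor q\rfloor$. Then every output $W$ of ODH on $\sigma$ (under any tie-breaking) satisfies $\big|W\cap\bigcup_{j=1}^ny_j\big|\ge\lfloor q\rfloor$.
   Context: An approval-based multi-winner election is a tuple $\sigma=\langle \mathcal V,\mathcal C,S,B\rangle$, where $\mathcal V$ is a finite set of agents, $\mathcal C$ is a finite set of candidates, $1\le S\le|\mathcal C|$ is an integer, and $B:2^{\mathcal C}\to\mathbb N$ gives, for each $\mathcal A\subseteq\mathcal C$, the number $B(\mathcal A)$ of agents whose ballot is exactly $\mathcal A$ (with $\sum_{\mathcal A}B(\mathcal A)\le|\mathcal V|$). For a non-empty $\mathcal A\subseteq\mathcal C$, the family $\mathfrak F_{\sigma,\mathcal A}$ is the set of all $F:2^{\mathcal C}\times\mathcal A\to\mathbb R$ such that: - $F(y,c)\ge0$ for all $y$ and $c$; - $F(y,c)=0$ if $c\notin y$; - $\sum_{c\in\mathcal A\cap y}F(y,c)=B(y)$ whenever $y\cap\mathcal A\neq\emptyset$. We write $\mathrm{Supp}_F(c)=\sum_yF(y,c)$ and $\mathrm{maxMin}(\sigma,\mathcal A)=\sup_{F\in\mathfrak F_{\sigma,\mathcal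 A}}\min_{c\in\mathcal A}\mathrm{Supp}_F(c)$. We also write $\mathfrak F^{\mathrm{opt}}_{\sigma,\mathcal A}=\{F\in\mathfrak F_{\sigma,\mathcal A}:\mathrm{Supp}_F(c)\ge\mathrm{maxMin}(\sigma,\mathcal A)\ \forall c\in\mathcal A\}$. The Open D'Hondt (ODH) rule proceeds as follows. Start with $\mathcal C_e=\emptyset$ and repeat $S$ times: - for each $c\in\mathcal C\setminus\mathcal C_e$, choose any $F\in\mathfrak F^{\mathrm{opt}}_{\sigma,\mathcal C_e\cup\{c\}}$ and set $s_c=\mathrm{Supp}_F(c)$; - then add to $\mathcal C_e$ some $w$ maximizing $s_w$ (ties broken arbitrarily). Finally, output $\mathcal C_e$. *)

theory Defs
  imports Complex_Main
begin

text \<open>An approval-based multi-winner election: agents V, candidates C, committee size S,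
  ballot counts B (B y = number of agents whose ballot is exactly y; zero outside Pow C).\<close>
definition election :: "'v set \<Rightarrow> 'c set \<Rightarrow> nat \<Rightarrow> ('c set \<Rightarrow> nat) \<Rightarrow> bool" where
  "election V C S B \<longleftrightarrow> finite V \<and> finite C \<and> 1 \<le> S \<and> S \<le> card C
     \<and> (\<forall>y. \<not> y \<subseteq> C \<longrightarrow> B y = 0)
     \<and> (\<Sum>y\<in>Pow C. B y) \<le> card V"

definition feasible :: "'c set \<Rightarrow> ('c set \<Rightarrow> nat) \<Rightarrow> 'c set \<Rightarrow> ('c set \<Rightarrow> 'c \<Rightarrow> real) \<Rightarrow> bool" where
  "feasible C B A F \<longleftrightarrow>
     (\<forall>y\<in>Pow C. \<forall>c\<in>A. 0 \<le> F y c \<and> (c \<notin> y \<longrightarrow> F y c = 0))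
   \<and> (\<forall>y\<in>Pow C. y \<inter> A \<noteq> {} \<longrightarrow> (\<Sum>c\<in>A \<inter> y. F y c) = real (B y))"

definition supp :: "'c set \<Rightarrow> ('c set \<Rightarrow> 'c \<Rightarrow> real) \<Rightarrow> 'c \<Rightarrow> real" where
  "supp C F c = (\<Sum>y\<in>Pow C. F y c)"

definition maxMin :: "'c set \<Rightarrow> ('c set \<Rightarrow> nat) \<Rightarrow> 'c set \<Rightarrow> real" where
  "maxMin C B A = Sup ((\<lambda>F. Min (supp C F ` A)) ` {F. feasible C B A F})"

definition opt :: "'c set \<Rightarrow> ('c set \<Rightarrow> nat) \<Rightarrow> 'c set \<Rightarrow> ('c set \<Rightarrow> 'c \<Rightarrow> real) set" where
  "opt C B A = {F. feasible C B A F \<and> (\<forall>c\<in>A. maxMin C B A \<le> supp C F c)}"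

definition odh_step :: "'c set \<Rightarrow> ('c set \<Rightarrow> nat) \<Rightarrow> 'c set \<Rightarrow> 'c \<Rightarrow> bool" where
  "odh_step C B Ce w \<longleftrightarrow> w \<in> C - Ce \<and>
     (\<exists>s :: 'c \<Rightarrow> real.
        (\<forall>c\<in>C - Ce. \<exists>F\<in>opt C B (Ce \<union> {c}). s c = supp C F c)
      \<and> (\<forall>c\<in>C - Ce. s c \<le> s w))"

inductive odh_run :: "'c set \<Rightarrow> ('c set \<Rightarrow> nat) \<Rightarrow> nat \<Rightarrow> 'c set \<Rightarrow> bool"
  for C B where
  start: "odh_run C B 0 {}"
| step: "odh_run C B k Ce \<Longrightarrow> odh_step C B Ce w \<Longrightarrow> odh_run C B (Suc k) (insert w Ce)"

definition odh_output :: "'c set \<Rightarrow> nat \<Rightarrow> ('c set \<Rightarrow> nat) \<Rightarrow> 'c set \<Rightarrow> bool" where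
  "odh_output C S B W \<longleftrightarrow> odh_run C B S W"

end

theory Submission
  imports Defs
begin

text \<open>Let \<theta> = |V|/S and suppose fewer than \<lfloor>q\<rfloor> winners lie in \<Union>Y, so that some a \<in> A is
  never elected. Call a committee \<theta>-supported if some feasible assignment of the ballots gives
  each member support at least \<theta>. Since every ballot of Y approves of a, a \<theta>-supported
  committee stays \<theta>-supported when a is added: its members in \<Union>Y need only \<theta> each from the
  ballots of Y, and the remainder, at least \<theta>, can go to a. Hence in every round a would score at
  least \<theta>, so does the winner, and by concavity of the max-min support the committee stays
  \<theta>-supported. In the end W + a is \<theta>-supported with S + 1 members, which needs
  (S + 1) \<theta> > |V| votes.\<close>

lemma feasible_nonneg:
  assumes "feasible C B A F" "y \<in> Pow C" "c \<in> A"
  shows "0 \<le> F y c"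
  using assms unfolding feasible_def by blast

lemma feasible_zero:
  assumes "feasible C B A F" "y \<in> Pow C" "c \<in> A" "c \<notin> y"
  shows "F y c = 0"
  using assms unfolding feasible_def by blast

lemma feasible_sum_restrict:
  assumes "feasible C B A F" "y \<in> Pow C" "finite A"
  shows "(\<Sum>c\<in>A. F y c) = (\<Sum>c\<in>A \<inter> y. F y c)"
  using assms by (intro sum.mono_neutral_right) (auto intro: feasible_zero)

lemma feasible_sum_eq:
  assumes "feasible C B A F" "y \<in> Pow C" "finite A" "y \<inter> A \<noteq> {}"
  shows "(\<Sum>c\<in>A. F y c) = real (B y)"
  using assms feasible_sum_restrict[OF assms(1-3)] unfolding feasible_def by simp

lemma feasible_sum_le:
  assumes "feasible C B A F" "y \<in> Pow C" "finite A"
  shows "(\<Sum>c\<in>A. F y c) \<le> real (B y)"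
proof (cases "y \<inter> A = {}")
  case True
  then show ?thesis using feasible_sum_restrict[OF assms] by (simp add: Int_commute)
qed (use feasible_sum_eq[OF assms] in simp)

lemma feasibleI:
  assumes "finite A"
    and "\<And>y c. y \<in> Pow C \<Longrightarrow> c \<in> A \<Longrightarrow> 0 \<le> F y c"
    and "\<And>y c. y \<in> Pow C \<Longrightarrow> c \<in> A \<Longrightarrow> c \<notin> y \<Longrightarrow> F y c = 0"
    and "\<And>y. y \<in> Pow C \<Longrightarrow> y \<inter> A \<noteq> {} \<Longrightarrow> (\<Sum>c\<in>A. F y c) = real (B y)"
  shows "feasible C B A F"
proof -
  have "(\<Sum>c\<in>A. F y c) = (\<Sum>c\<in>A \<inter> y. F y c)" if "y \<in> Pow C" for y
    using assms(1,3) that by (intro sum.mono_neutral_right) auto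
  then show ?thesis unfolding feasible_def using assms(2-4) by auto
qed

lemma supp_nonneg:
  assumes "feasible C B A F" "c \<in> A"
  shows "0 \<le> supp C F c"
  unfolding supp_def using assms by (intro sum_nonneg) (auto intro: feasible_nonneg)

lemma sum_supp_le:
  assumes "feasible C B A F" "finite A"
  shows "(\<Sum>c\<in>A. supp C F c) \<le> (\<Sum>y\<in>Pow C. real (B y))"
proof -
  have "(\<Sum>c\<in>A. supp C F c) = (\<Sum>y\<in>Pow C. \<Sum>c\<in>A. F y c)"
    unfolding supp_def by (rule sum.swap)
  also have "\<dots> \<le> (\<Sum>y\<in>Pow C. real (B y))"
    using assms by (intro sum_mono feasible_sum_le)
  finally show ?thesis .
qed

lemma Min_supp_le_maxMin:
  assumes "feasible C B A F" "finite A" "A \<noteq> {}"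
  shows "Min (supp C F ` A) \<le> maxMin C B A"
  unfolding maxMin_def
proof (rule cSup_upper)
  show "Min (supp C F ` A) \<in> (\<lambda>F. Min (supp C F ` A)) ` {F. feasible C B A F}"
    using assms by blast
  have "Min (supp C G ` A) \<le> (\<Sum>y\<in>Pow C. real (B y))" if G: "feasible C B A G" for G
  proof -
    obtain c where c: "c \<in> A" using assms(3) by blast
    have "Min (supp C G ` A) \<le> supp C G c" using c assms(2) by simp
    also have "\<dots> \<le> (\<Sum>c\<in>A. supp C G c)"
      using assms(2) c by (intro member_le_sum supp_nonneg[OF G]) auto
    also have "\<dots> \<le> (\<Sum>y\<in>Pow C. real (B y))" by (rule sum_supp_le[OF G assms(2)])
    finally show ?thesis .
  qed
  then show "bdd_above ((\<lambda>F. Min (supp C F ` A)) ` {F. feasible C B A F})"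
    by (intro bdd_aboveI) blast
qed

definition supported :: "'c set \<Rightarrow> ('c set \<Rightarrow> nat) \<Rightarrow> 'c set \<Rightarrow> real \<Rightarrow> bool" where
  "supported C B A \<theta> \<longleftrightarrow> (\<exists>F. feasible C B A F \<and> (\<forall>c\<in>A. \<theta> \<le> supp C F c))"

lemma supported_empty: "supported C B {} \<theta>"
  unfolding supported_def feasible_def by auto

lemma le_maxMin_if_supported:
  assumes "supported C B A \<theta>" "finite A" "A \<noteq> {}"
  shows "\<theta> \<le> maxMin C B A"
proof -
  obtain F where F: "feasible C B A F" "\<forall>c\<in>A. \<theta> \<le> supp C F c"
    using assms(1) unfolding supported_def by blast
  then have "\<theta> \<le> Min (supp C F ` A)" using assms(2,3) by simp
  then show ?thesis using Min_supp_le_maxMin[OF F(1) assms(2,3)] by linarith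
qed

lemma supported_if_le_maxMin:
  assumes "F \<in> opt C B A" "\<theta> \<le> maxMin C B A"
  shows "supported C B A \<theta>"
  using assms unfolding opt_def supported_def by force

lemma card_mult_le_if_supported:
  assumes "supported C B A \<theta>" "finite A"
  shows "real (card A) * \<theta> \<le> (\<Sum>y\<in>Pow C. real (B y))"
proof -
  obtain F where F: "feasible C B A F" "\<forall>c\<in>A. \<theta> \<le> supp C F c"
    using assms(1) unfolding supported_def by blast
  have "real (card A) * \<theta> \<le> (\<Sum>c\<in>A. supp C F c)"
    using sum_mono[of A "\<lambda>_. \<theta>" "supp C F"] F(2) by simp
  also have "\<dots> \<le> (\<Sum>y\<in>Pow C. real (B y))" by (rule sum_supp_le[OF F(1) assms(2)])
  finally show ?thesis .
qed

lemma feasible_convex_comb: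
  assumes "feasible C B A F" "feasible C B A G" "finite A" "0 \<le> t" "t \<le> 1"
  shows "feasible C B A (\<lambda>y c. t * F y c + (1 - t) * G y c)"
proof (rule feasibleI)
  fix y assume y: "y \<in> Pow C" "y \<inter> A \<noteq> {}"
  show "(\<Sum>c\<in>A. t * F y c + (1 - t) * G y c) = real (B y)"
    using feasible_sum_eq[OF assms(1) y(1) assms(3) y(2)] feasible_sum_eq[OF assms(2) y(1) assms(3) y(2)]
    by (simp add: sum.distrib flip: sum_distrib_left) (simp add: algebra_simps)
next
  fix y c assume "y \<in> Pow C" "c \<in> A"
  then have "0 \<le> F y c" "0 \<le> G y c" using assms(1,2) by (auto intro: feasible_nonneg)
  then show "0 \<le> t * F y c + (1 - t) * G y c" using assms(4,5) by simp
qed (use assms in \<open>simp_all add: feasible_zero\<close>)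

lemma supp_convex_comb:
  "supp C (\<lambda>y c. t * F y c + (1 - t) * G y c) c = t * supp C F c + (1 - t) * supp C G c"
  unfolding supp_def by (simp add: sum.distrib sum_distrib_left)

definition extend :: "('c set \<Rightarrow> nat) \<Rightarrow> 'c \<Rightarrow> 'c set \<Rightarrow> ('c set \<Rightarrow> 'c \<Rightarrow> real) \<Rightarrow> 'c set \<Rightarrow> 'c \<Rightarrow> real" where
  "extend B w X G y c =
     (if c = w then (if w \<in> y \<and> y \<inter> X = {} then real (B y) else 0) else G y c)"

lemma feasible_extend:
  assumes G: "feasible C B X G" "finite X" "w \<notin> X"
  shows "feasible C B (insert w X) (extend B w X G)"
proof (rule feasibleI)
  fix y c assume y: "y \<in> Pow C" and c: "c \<in> insert w X"
  show "0 \<le> extend B w X G y c"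
    using c feasible_nonneg[OF G(1) y] by (auto simp: extend_def)
  show "extend B w X G y c = 0" if "c \<notin> y"
    using c that feasible_zero[OF G(1) y] by (auto simp: extend_def)
next
  fix y assume y: "y \<in> Pow C" "y \<inter> insert w X \<noteq> {}"
  have "(\<Sum>c\<in>X. extend B w X G y c) = (\<Sum>c\<in>X. G y c)"
    using G(3) by (intro sum.cong) (auto simp: extend_def)
  then have "(\<Sum>c\<in>insert w X. extend B w X G y c) = extend B w X G y w + (\<Sum>c\<in>X. G y c)"
    using G(2,3) by simp
  moreover have "(\<Sum>c\<in>X. G y c) = (if y \<inter> X = {} then 0 else real (B y))"
    using feasible_sum_eq[OF G(1) y(1) G(2)] feasible_zero[OF G(1) y(1)]
    by (auto intro: sum.neutral)
  ultimately show "(\<Sum>c\<in>insert w X. extend B w X G y c) = real (B y)"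
    using y(2) by (auto simp: extend_def)
qed (use G(2) in simp)

lemma supp_extend: "c \<noteq> w \<Longrightarrow> supp C (extend B w X G) c = supp C G c"
  unfolding supp_def extend_def by simp

text \<open>If the optimum \<mu> were below \<theta>, mixing the optimal F with the extension of a \<theta>-supporting assignment for X,
  with weight (\<theta> - \<mu>) / (2\<theta>) on the latter, would raise every support strictly above \<mu>.\<close>
lemma le_maxMin_insert:
  assumes X: "supported C B X \<theta>" "finite X" "w \<notin> X"
    and F: "F \<in> opt C B (insert w X)" "\<theta> \<le> supp C F w"
  shows "\<theta> \<le> maxMin C B (insert w X)"
proof (rule ccontr)
  define \<mu> where "\<mu> = maxMin C B (insert w X)"
  assume "\<not> \<theta> \<le> maxMin C B (insert w X)"
  then have \<mu>\<theta>: "\<mu> < \<theta>" unfolding \<mu>_def by simp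
  obtain G where G: "feasible C B X G" "\<forall>c\<in>X. \<theta> \<le> supp C G c"
    using X(1) unfolding supported_def by blast
  have finWX: "finite (insert w X)" using X(2) by simp
  have Ff: "feasible C B (insert w X) F" and F\<mu>: "\<forall>c\<in>insert w X. \<mu> \<le> supp C F c"
    using F(1) unfolding opt_def \<mu>_def by auto
  have "0 \<le> Min (supp C F ` insert w X)"
    using finWX supp_nonneg[OF Ff] by simp
  also have "\<dots> \<le> \<mu>" unfolding \<mu>_def by (rule Min_supp_le_maxMin[OF Ff finWX]) simp
  finally have \<mu>0: "0 \<le> \<mu>" .
  define t where "t = (\<theta> - \<mu>) / (2 * \<theta>)"
  have t: "0 < t" "t \<le> 1" using \<mu>\<theta> \<mu>0 by (auto simp: t_def field_simps)
  define H where "H y c = t * extend B w X G y c + (1 - t) * F y c" for y c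
  have feasH: "feasible C B (insert w X) H"
    unfolding H_def using feasible_extend[OF G(1) X(2,3)] Ff finWX t
    by (intro feasible_convex_comb) auto
  have "\<mu> < supp C H c" if c: "c \<in> insert w X" for c
  proof (cases "c = w")
    case True
    have "0 \<le> t * supp C (extend B w X G) w"
      using t supp_nonneg[OF feasible_extend[OF G(1) X(2,3)]] by simp
    moreover have "(1 - t) * \<theta> \<le> (1 - t) * supp C F w"
      using F(2) t by (intro mult_left_mono) auto
    moreover have "\<mu> < (1 - t) * \<theta>"
      using \<mu>\<theta> \<mu>0 by (simp add: t_def field_simps)
    ultimately show ?thesis unfolding H_def supp_convex_comb True by linarith
  next
    case False
    then have "c \<in> X" using c by simp
    have "t * \<theta> \<le> t * supp C G c"
      using G(2) \<open>c \<in> X\<close> t by (intro mult_left_mono) auto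
    moreover have "(1 - t) * \<mu> \<le> (1 - t) * supp C F c"
      using F\<mu> c t by (intro mult_left_mono) auto
    moreover have "0 < t * (\<theta> - \<mu>)" using t \<mu>\<theta> by simp
    ultimately show ?thesis
      unfolding H_def supp_convex_comb supp_extend[OF False] by (simp add: algebra_simps)
  qed
  then have "\<mu> < Min (supp C H ` insert w X)" using finWX by simp
  also have "\<dots> \<le> \<mu>" unfolding \<mu>_def by (rule Min_supp_le_maxMin[OF feasH finWX]) simp
  finally show False by simp
qed

definition shift :: "'c set set \<Rightarrow> 'c \<Rightarrow> 'c set \<Rightarrow> ('c \<Rightarrow> real) \<Rightarrow> ('c set \<Rightarrow> 'c \<Rightarrow> real) \<Rightarrow> 'c set \<Rightarrow> 'c \<Rightarrow> real" where
  "shift Y a X r G y c =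
     (if y \<in> Y then (if c = a then G y a + (\<Sum>d\<in>X. (1 - r d) * G y d) else r c * G y c)
      else G y c)"

lemma feasible_shift:
  assumes G: "feasible C B (insert a X) G" "finite X" "a \<notin> X"
    and Y: "\<forall>y\<in>Y. a \<in> y" and ret: "\<forall>d\<in>X. 0 \<le> r d \<and> r d \<le> 1"
  shows "feasible C B (insert a X) (shift Y a X r G)"
proof (rule feasibleI)
  fix y c assume y: "y \<in> Pow C" and c: "c \<in> insert a X"
  have Gnn: "\<And>d. d \<in> insert a X \<Longrightarrow> 0 \<le> G y d" using feasible_nonneg[OF G(1) y] .
  have "0 \<le> (\<Sum>d\<in>X. (1 - r d) * G y d)"
    using Gnn ret by (intro sum_nonneg) simp
  then show "0 \<le> shift Y a X r G y c"
    using c Gnn ret by (auto simp: shift_def)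
  show "shift Y a X r G y c = 0" if "c \<notin> y"
    using c that Y feasible_zero[OF G(1) y] by (auto simp: shift_def)
next
  fix y assume y: "y \<in> Pow C" "y \<inter> insert a X \<noteq> {}"
  show "(\<Sum>c\<in>insert a X. shift Y a X r G y c) = real (B y)"
  proof (cases "y \<in> Y")
    case True
    have "(\<Sum>c\<in>X. shift Y a X r G y c) = (\<Sum>d\<in>X. r d * G y d)"
      using True G(3) by (intro sum.cong) (auto simp: shift_def)
    then have "(\<Sum>c\<in>insert a X. shift Y a X r G y c) = (\<Sum>c\<in>insert a X. G y c)"
      using True G(2,3)
      by (simp add: shift_def algebra_simps sum_subtractf sum.distrib flip: sum.distrib)
    then show ?thesis using feasible_sum_eq[OF G(1) y(1) _ y(2)] G(2) by simp
  next
    case False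
    then show ?thesis using feasible_sum_eq[OF G(1) y(1) _ y(2)] G(2) by (simp add: shift_def)
  qed
qed (use G(2) in simp)

lemma supp_shift:
  assumes "c \<noteq> a" "Y \<subseteq> Pow C" "finite C"
  shows "supp C (shift Y a X r G) c = supp C G c - (1 - r c) * (\<Sum>y\<in>Y. G y c)"
proof -
  have "supp C (shift Y a X r G) c = (\<Sum>y\<in>Pow C. G y c - (if y \<in> Y then (1 - r c) * G y c else 0))"
    unfolding supp_def using assms(1) by (intro sum.cong) (auto simp: shift_def algebra_simps)
  also have "\<dots> = supp C G c - (\<Sum>y\<in>Pow C \<inter> Y. (1 - r c) * G y c)"
    unfolding supp_def sum_subtractf sum.inter_restrict[OF finite_Pow_iff[THEN iffD2, OF assms(3)]] ..
  also have "Pow C \<inter> Y = Y" using assms(2) by blast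
  finally show ?thesis by (simp add: sum_distrib_left)
qed

lemma supp_shift_target:
  assumes G: "feasible C B (insert a X) G" "finite X" "a \<notin> X"
    and Y: "finite C" "Y \<subseteq> Pow C" "\<forall>y\<in>Y. a \<in> y"
  shows "(\<Sum>y\<in>Y. real (B y)) - (\<Sum>d\<in>X. r d * (\<Sum>y\<in>Y. G y d)) \<le> supp C (shift Y a X r G) a"
proof -
  have "shift Y a X r G y a = real (B y) - (\<Sum>d\<in>X. r d * G y d)" if y: "y \<in> Y" for y
  proof -
    have "G y a + (\<Sum>d\<in>X. G y d) = real (B y)"
      using feasible_sum_eq[OF G(1), of y] G(2,3) Y(2,3) y by auto
    then show ?thesis using y by (simp add: shift_def algebra_simps sum_subtractf)
  qed
  then have "(\<Sum>y\<in>Y. real (B y)) - (\<Sum>d\<in>X. r d * (\<Sum>y\<in>Y. G y d))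
      = (\<Sum>y\<in>Y. shift Y a X r G y a)"
    by (simp add: sum_subtractf sum_distrib_left sum.swap[of _ Y])
  also have "\<dots> \<le> supp C (shift Y a X r G) a"
    unfolding supp_def using Y(1,2) feasible_nonneg[OF G(1)]
    by (intro sum_mono2) (auto simp: shift_def)
  finally show ?thesis .
qed

text \<open>Each member d of X keeps from the ballots in Y at most \<theta> of its share and passes the rest
  on to a; since a is approved by all of Y, it collects at least
  (\<Sum>y\<in>Y. B y) - |X \<inter> \<Union>Y| \<theta> \<ge> \<theta>.\<close>
lemma supported_insert_common_candidate:
  assumes C: "finite C" "X \<subseteq> C" "a \<notin> X"
    and Y: "Y \<subseteq> Pow C" "\<forall>y\<in>Y. a \<in> y"
    and X: "supported C B X \<theta>" "0 \<le> \<theta>"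
    and quota: "(real (card (X \<inter> \<Union>Y)) + 1) * \<theta> \<le> (\<Sum>y\<in>Y. real (B y))"
  shows "supported C B (insert a X) \<theta>"
proof -
  have finX: "finite X" using C(1,2) finite_subset by blast
  obtain G where G: "feasible C B X G" "\<forall>c\<in>X. \<theta> \<le> supp C G c"
    using X(1) unfolding supported_def by blast
  define E where "E = extend B a X G"
  have E: "feasible C B (insert a X) E"
    unfolding E_def by (rule feasible_extend[OF G(1) finX C(3)])
  define load where "load d = (\<Sum>y\<in>Y. E y d)" for d
  define r where "r d = (if load d \<le> \<theta> then 1 else \<theta> / load d)" for d
  define H where "H = shift Y a X r E"
  have r: "0 \<le> r d \<and> r d \<le> 1" for d
    using X(2) by (auto simp: r_def field_simps)
  have r_load: "r d * load d = min (load d) \<theta>" for d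
    using X(2) by (auto simp: r_def)
  have H: "feasible C B (insert a X) H"
    unfolding H_def using feasible_shift[OF E finX C(3) Y(2)] r by blast
  have "\<theta> \<le> supp C H d" if d: "d \<in> X" for d
  proof -
    have da: "d \<noteq> a" using d C(3) by blast
    have "load d \<le> supp C E d"
      unfolding load_def supp_def using C(1) Y(1) feasible_nonneg[OF E] d
      by (intro sum_mono2) auto
    moreover have "supp C H d = supp C E d - (1 - r d) * load d"
      unfolding H_def load_def by (rule supp_shift[OF da Y(1) C(1)])
    moreover have "supp C E d = supp C G d"
      unfolding E_def by (rule supp_extend[OF da])
    ultimately have "supp C H d = supp C G d - load d + min (load d) \<theta>"
      using r_load[of d] by (simp add: algebra_simps)
    then show ?thesis
      using G(2) d \<open>load d \<le> supp C E d\<close> \<open>supp C E d = supp C G d\<close>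
      by (simp add: min_def)
  qed
  moreover have "\<theta> \<le> supp C H a"
  proof -
    have "(\<Sum>d\<in>X. r d * load d) = (\<Sum>d\<in>X \<inter> \<Union>Y. r d * load d)"
    proof (rule sum.mono_neutral_right)
      show "\<forall>d\<in>X - X \<inter> \<Union>Y. r d * load d = 0"
      proof
        fix d assume d: "d \<in> X - X \<inter> \<Union>Y"
        have "E y d = 0" if "y \<in> Y" for y
          using feasible_zero[OF E, of y d] that d Y(1) by auto
        then show "r d * load d = 0" by (simp add: load_def)
      qed
    qed (use finX in auto)
    also have "\<dots> \<le> real (card (X \<inter> \<Union>Y)) * \<theta>"
      using sum_mono[of "X \<inter> \<Union>Y" "\<lambda>d. r d * load d" "\<lambda>_. \<theta>"] by (simp add: r_load)
    finally have "(\<Sum>d\<in>X. r d * load d) \<le> real (card (X \<inter> \<Union>Y)) * \<theta>" .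
    moreover have "(\<Sum>y\<in>Y. real (B y)) - (\<Sum>d\<in>X. r d * load d) \<le> supp C H a"
      unfolding H_def load_def by (rule supp_shift_target[OF E finX C(3) C(1) Y])
    ultimately show ?thesis using quota by (simp add: algebra_simps)
  qed
  ultimately show ?thesis unfolding supported_def using H by blast
qed

lemma odh_run_subset_card:
  assumes "odh_run C B k Ce"
  shows "Ce \<subseteq> C \<and> finite Ce \<and> card Ce = k"
  using assms by induction (auto simp: odh_step_def)

lemma odh_step_winner_score:
  assumes "odh_step C B Ce w" "a \<in> C - Ce" "\<theta> \<le> maxMin C B (insert a Ce)"
  shows "\<exists>F\<in>opt C B (insert w Ce). \<theta> \<le> supp C F w"
proof -
  from assms(1) obtain s where w: "w \<in> C - Ce"
    and s: "\<forall>c\<in>C - Ce. \<exists>F\<in>opt C B (insert c Ce). s c = supp C F c"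
    and max: "\<forall>c\<in>C - Ce. s c \<le> s w"
    unfolding odh_step_def by auto
  obtain Fa where "Fa \<in> opt C B (insert a Ce)" "s a = supp C Fa a"
    using s assms(2) by blast
  then have "\<theta> \<le> s a" using assms(2,3) unfolding opt_def by force
  moreover obtain Fw where "Fw \<in> opt C B (insert w Ce)" "s w = supp C Fw w"
    using s w by blast
  ultimately show ?thesis using max assms(2) by force
qed

lemma odh_run_supported:
  assumes C: "finite C" "Y \<subseteq> Pow C" "a \<in> C" "\<forall>y\<in>Y. a \<in> y"
    and \<theta>: "0 \<le> \<theta>" "(real m + 1) * \<theta> \<le> (\<Sum>y\<in>Y. real (B y))"
  shows "odh_run C B k Ce \<Longrightarrow> a \<notin> Ce \<Longrightarrow> card (Ce \<inter> \<Union>Y) \<le> m \<Longrightarrow> supported C B Ce \<theta>"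
proof (induction rule: odh_run.induct)
  case start
  show ?case by (rule supported_empty)
next
  case (step k Ce w)
  have Ce: "Ce \<subseteq> C" "finite Ce" using odh_run_subset_card[OF step.hyps(1)] by auto
  have w: "w \<in> C - Ce" using step.hyps(2) unfolding odh_step_def by blast
  have "card (Ce \<inter> \<Union>Y) \<le> card (insert w Ce \<inter> \<Union>Y)"
    using Ce by (intro card_mono) auto
  then have m: "card (Ce \<inter> \<Union>Y) \<le> m" using step.prems(2) by linarith
  have aCe: "a \<notin> Ce" using step.prems(1) by simp
  have Ce_supp: "supported C B Ce \<theta>" using step.IH aCe m by blast
  have "(real (card (Ce \<inter> \<Union>Y)) + 1) * \<theta> \<le> (real m + 1) * \<theta>"
    using m \<theta>(1) by (intro mult_right_mono) auto
  then have "supported C B (insert a Ce) \<theta>"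
    using supported_insert_common_candidate[OF C(1) Ce(1) aCe C(2,4) Ce_supp \<theta>(1)] \<theta>(2)
    by linarith
  then have "\<theta> \<le> maxMin C B (insert a Ce)"
    using Ce(2) by (intro le_maxMin_if_supported) auto
  then obtain F where "F \<in> opt C B (insert w Ce)" "\<theta> \<le> supp C F w"
    using odh_step_winner_score[OF step.hyps(2)] C(3) aCe by blast
  then have "\<theta> \<le> maxMin C B (insert w Ce)"
    using le_maxMin_insert[OF Ce_supp Ce(2)] w by blast
  then show ?case using supported_if_le_maxMin \<open>F \<in> opt C B (insert w Ce)\<close> by blast
qed

lemma odh_run_common_candidate_bound:
  assumes C: "finite C" "Y \<subseteq> Pow C" "a \<in> C" "\<forall>y\<in>Y. a \<in> y"
    and W: "odh_run C B k W" "a \<notin> W"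
    and \<theta>: "0 \<le> \<theta>" "(real (card (W \<inter> \<Union>Y)) + 1) * \<theta> \<le> (\<Sum>y\<in>Y. real (B y))"
  shows "(real k + 1) * \<theta> \<le> (\<Sum>y\<in>Pow C. real (B y))"
proof -
  have W': "W \<subseteq> C" "finite W" "card W = k" using odh_run_subset_card[OF W(1)] by auto
  have "supported C B W \<theta>"
    using odh_run_supported[OF C \<theta> W(1,2)] by simp
  then have "supported C B (insert a W) \<theta>"
    using supported_insert_common_candidate[OF C(1) W'(1) W(2) C(2,4) _ \<theta>] by blast
  from card_mult_le_if_supported[OF this] show ?thesis using W' W(2) by (simp add: add.commute)
qed

theorem theorem5:
  fixes V :: "'v set" and C :: "'c set" and S :: nat and B :: "'c set \<Rightarrow> nat"
    and A :: "'c set" and Y :: "'c set set" and W :: "'c set"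
  assumes elec: "election V C S B"
    and AC: "A \<subseteq> C"
    and YC: "Y \<subseteq> Pow C"
    and Ay: "\<forall>y\<in>Y. A \<subseteq> y"
    and quota: "real (card A) \<ge> of_int \<lfloor>(\<Sum>y\<in>Y. real (B y)) / real (card V) * real S\<rfloor>"
    and out: "odh_output C S B W"
  shows "real (card (W \<inter> \<Union>Y)) \<ge> of_int \<lfloor>(\<Sum>y\<in>Y. real (B y)) / real (card V) * real S\<rfloor>"
proof (rule ccontr)
  define N where "N = (\<Sum>y\<in>Y. real (B y))"
  define m where "m = card (W \<inter> \<Union>Y)"
  define \<theta> where "\<theta> = real (card V) / real S"
  assume "\<not> ?thesis"
  then have m_q: "m < \<lfloor>N / real (card V) * real S\<rfloor>" unfolding m_def N_def by linarith
  then have m1: "real m + 1 \<le> N / real (card V) * real S" by linarith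
  have V: "card V > 0" using m1 by (cases "card V = 0") auto
  have "Y \<noteq> {}" using m1 by (auto simp: N_def)
  have C: "finite C" "1 \<le> S" "(\<Sum>y\<in>Pow C. B y) \<le> card V"
    using elec unfolding election_def by auto
  have W: "odh_run C B S W" "finite W" using out odh_run_subset_card unfolding odh_output_def by auto
  have "card (W \<inter> A) \<le> m"
    unfolding m_def using W(2) Ay \<open>Y \<noteq> {}\<close> by (intro card_mono) auto
  moreover have "m < card A" using m_q quota unfolding N_def by linarith
  ultimately have "\<not> A \<subseteq> W" by (metis Int_absorb1 Int_commute leD)
  then obtain a where a: "a \<in> A" "a \<notin> W" by blast
  have "(real m + 1) * \<theta> \<le> N"
    using mult_right_mono[OF m1, of \<theta>] V C(2) by (simp add: \<theta>_def field_simps)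
  then have "(real S + 1) * \<theta> \<le> (\<Sum>y\<in>Pow C. real (B y))"
    using a AC Ay by (intro odh_run_common_candidate_bound[OF C(1) YC _ _ W(1)])
      (auto simp: \<theta>_def m_def N_def)
  also have "\<dots> \<le> real (card V)" using C(3) by (simp flip: of_nat_sum)
  finally show False using V C(2) by (simp add: \<theta>_def field_simps)
qed

end
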